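(* Fix $\sigma>0$. There exist, for every $n\ge 1$, a distribution $\mathcal{D}_n$ supported on $[0,1]$ and a noise model, namely i.i.d. $\eta_i\sim\mathcal{N}(0,\sigma^2)$ independent of the rewards (in particular $\sigma$-sub-Gaussian), such that the following holds. Let $X_1,\dots,X_n$ be i.i.d. with law $\mathcal{D}_n$ and let the decision maker observe only $y_i=X_i+\eta_i$. Then $$\lim_{n\to\infty}\ \sup_{\tau}\ \frac{\mathbb{E}[X_\tau]}{\mathbb{E}[\max_{i\in[n]}X_i]}=0,$$ where the supremum ranges over all (possibly randomized) rules $\tau\in\{1,\dots,n+1\}$ whose choice depends only on the observations $(y_1,\dots,y_n)$ and independent internal randomness.
   Context: The convention $X_{n+1}:=0$ is used: $\tau=n+1$ means that no index is accepted and the payoff is $0$. The payoff of a rule is $\mathbb{E}[X_\tau]$ and the benchmark (prophet) is $\mathbb{E}[\max_{i\in[n]}X_i]$. *)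

theory Defs
  imports "HOL-Probability.Probability"
begin

text \<open>Indices are 0-based: rewards X_0..X_(n-1); a rule returns an index k in {0..n};
  k = n means that no index is accepted (payoff 0).\<close>

text \<open>Gaussian noise law N(0, sigma^2) (normal_density takes the standard deviation).\<close>
definition noise :: "real \<Rightarrow> real measure" where
  "noise \<sigma> = density lborel (normal_density 0 \<sigma>)"

text \<open>Joint law of (X, eta, U): X_i iid D, eta_i iid N(0,sigma^2), U uniform on [0,1]
  (internal randomness of the rule), all independent.\<close>
definition joint :: "real measure \<Rightarrow> real \<Rightarrow> nat \<Rightarrow>
    ((nat \<Rightarrow> real) \<times> (nat \<Rightarrow> real) \<times> real) measure" where
  "joint D \<sigma> n = (PiM {..<n} (\<lambda>_. D)) \<Otimes>\<^sub>M
      ((PiM {..<n} (\<lambda>_. noise \<sigma>)) \<Otimes>\<^sub>M uniform_measure lborel {0..1})"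

definition rules :: "nat \<Rightarrow> ((nat \<Rightarrow> real) \<times> real \<Rightarrow> nat) set" where
  "rules n = {\<tau>. \<tau> \<in> (PiM {..<n} (\<lambda>_. borel :: real measure)) \<Otimes>\<^sub>M (borel :: real measure)
                    \<rightarrow>\<^sub>M count_space UNIV \<and> (\<forall>z. \<tau> z \<le> n)}"

definition payoff :: "real measure \<Rightarrow> real \<Rightarrow> nat \<Rightarrow> ((nat \<Rightarrow> real) \<times> real \<Rightarrow> nat) \<Rightarrow> real" where
  "payoff D \<sigma> n \<tau> = (\<integral>\<omega>. (let x = fst \<omega>; e = fst (snd \<omega>); u = snd (snd \<omega>);
        y = (\<lambda>i\<in>{..<n}. x i + e i); k = \<tau> (y, u)
      in if k < n then x k else 0) \<partial>joint D \<sigma> n)"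

definition prophet :: "real measure \<Rightarrow> nat \<Rightarrow> real" where
  "prophet D n = (\<integral>x. (MAX i\<in>{..<n}. x i) \<partial>PiM {..<n} (\<lambda>_. D))"

end

theory Submission
  imports Defs
begin

(* The rewards are \<delta> times Bernoulli(p) with p = \<delta> = 1/(n+1), so the prophet earns
   \<delta> (1 - (1 - p)^n) \<ge> \<delta>/2.  A rule that stops at k gains only when X_k = \<delta>.  Given everything
   except X_k, the observation y_k = X_k + \<eta>_k is Gaussian with mean \<delta> or 0, and these two laws
   are within total variation O(\<delta>/\<sigma>) of each other.  Hence
     P(\<tau> = k, X_k = \<delta>) \<le> p (P(\<tau> = k | X_k = 0) + O(\<delta>/\<sigma>)) \<le> p/(1-p) P(\<tau> = k) + O(p \<delta>/\<sigma>),
   and summing over k gives E[X_\<tau>] \<le> \<delta> (p/(1-p) + O(n p \<delta>/\<sigma>)) = O(\<delta>/n): the ratio is O(1/n). *)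

section \<open>Resampling one coordinate of the joint law\<close>

lemma measurable_fun_upd_const:
  "k \<in> I \<Longrightarrow> a \<in> space (M k) \<Longrightarrow> (\<lambda>x. x(k := a)) \<in> PiM I M \<rightarrow>\<^sub>M PiM I M"
  by (intro measurable_fun_upd[where J = I]) auto

lemma (in product_sigma_finite) nn_integral_PiM_resample:
  assumes I: "finite I" "k \<in> I" and prob: "prob_space (M k)"
    and f[measurable]: "f \<in> borel_measurable (PiM I M)"
  shows "(\<integral>\<^sup>+x. f x \<partial>PiM I M) = (\<integral>\<^sup>+a. \<integral>\<^sup>+x. f (x(k := a)) \<partial>PiM I M \<partial>M k)"
proof -
  define J where "J = I - {k}"
  have IJ: "I = insert k J" "finite J" "k \<notin> J"
    using I by (auto simp: J_def)
  have "(\<integral>\<^sup>+x. f x \<partial>PiM I M) = (\<integral>\<^sup>+a. \<integral>\<^sup>+x. f (x(k := a)) \<partial>PiM J M \<partial>M k)"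
    using product_nn_integral_insert_rev[OF IJ(2,3)] f by (simp add: IJ(1))
  also have "\<dots> = (\<integral>\<^sup>+a. \<integral>\<^sup>+x. f (x(k := a)) \<partial>PiM I M \<partial>M k)"
  proof (rule nn_integral_cong)
    fix a assume a: "a \<in> space (M k)"
    have "(\<lambda>x. x(k := a)) \<in> PiM I M \<rightarrow>\<^sub>M PiM I M"
      using I(2) a by (rule measurable_fun_upd_const)
    then have "(\<lambda>x. f (x(k := a))) \<in> borel_measurable (PiM I M)"
      by measurable
    then have "(\<integral>\<^sup>+x. f (x(k := a)) \<partial>PiM I M) = (\<integral>\<^sup>+x. \<integral>\<^sup>+b. f (x(k := a)) \<partial>M k \<partial>PiM J M)"
      using product_nn_integral_insert[OF IJ(2,3), of "\<lambda>x. f (x(k := a))"]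
      unfolding IJ(1)[symmetric] by simp
    also have "\<dots> = (\<integral>\<^sup>+x. f (x(k := a)) \<partial>PiM J M)"
      by (simp add: prob_space.emeasure_space_1[OF prob])
    finally show "(\<integral>\<^sup>+x. f (x(k := a)) \<partial>PiM J M) = (\<integral>\<^sup>+x. f (x(k := a)) \<partial>PiM I M)" ..
  qed
  finally show ?thesis .
qed

lemma sets_noise[measurable_cong]: "sets (noise \<sigma>) = sets borel"
  by (simp add: noise_def)

lemma prob_space_noise: "\<sigma> > 0 \<Longrightarrow> prob_space (noise \<sigma>)"
  unfolding noise_def by (rule prob_space_normal_density)

lemma prob_space_joint: "prob_space D \<Longrightarrow> \<sigma> > 0 \<Longrightarrow> prob_space (joint D \<sigma> n)"
  unfolding joint_def
  by (intro prob_space_pair prob_space_PiM prob_space_noise prob_space_uniform_measure) auto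

context
  fixes D :: "real measure" and \<sigma> :: real and n :: nat
  assumes D: "prob_space D" and \<sigma>: "\<sigma> > 0"
begin

abbreviation "rewards \<equiv> PiM {..<n} (\<lambda>_. D)"
abbreviation "noises \<equiv> PiM {..<n} (\<lambda>_. noise \<sigma>)"
abbreviation "unit_uniform \<equiv> uniform_measure lborel {0..1::real}"

interpretation PD: product_sigma_finite "\<lambda>_::nat. D"
  by (simp add: product_sigma_finite_def prob_space_imp_sigma_finite D)

interpretation PN: product_sigma_finite "\<lambda>_::nat. noise \<sigma>"
  by (simp add: product_sigma_finite_def prob_space_imp_sigma_finite prob_space_noise \<sigma>)

interpretation U: prob_space unit_uniform
  by (intro prob_space_uniform_measure) auto

interpretation P: sigma_finite_measure rewards
  by (intro PD.sigma_finite) simp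

interpretation N: sigma_finite_measure noises
  by (intro PN.sigma_finite) simp

interpretation NU: pair_sigma_finite noises unit_uniform ..

interpretation PNU: pair_sigma_finite rewards "noises \<Otimes>\<^sub>M unit_uniform" ..

lemmas [measurable (raw)] = P.borel_measurable_nn_integral U.borel_measurable_nn_integral
  NU.P.borel_measurable_nn_integral

lemma nn_integral_joint_reward_outer:
  assumes [measurable]: "F \<in> borel_measurable (joint D \<sigma> n)"
  shows "(\<integral>\<^sup>+\<omega>. F \<omega> \<partial>joint D \<sigma> n) = (\<integral>\<^sup>+x. \<integral>\<^sup>+v. F (x, v) \<partial>(noises \<Otimes>\<^sub>M unit_uniform) \<partial>rewards)"
  unfolding joint_def by (rule NU.nn_integral_fst[symmetric]) (simp add: joint_def[symmetric])

lemma nn_integral_joint_noise_outer: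
  assumes [measurable]: "F \<in> borel_measurable (joint D \<sigma> n)"
  shows "(\<integral>\<^sup>+\<omega>. F \<omega> \<partial>joint D \<sigma> n) = (\<integral>\<^sup>+e. \<integral>\<^sup>+u. \<integral>\<^sup>+x. F (x, e, u) \<partial>rewards \<partial>unit_uniform \<partial>noises)"
proof -
  have "(\<integral>\<^sup>+\<omega>. F \<omega> \<partial>joint D \<sigma> n) = (\<integral>\<^sup>+v. \<integral>\<^sup>+x. F (x, v) \<partial>rewards \<partial>(noises \<Otimes>\<^sub>M unit_uniform))"
    unfolding joint_def by (rule PNU.nn_integral_snd[symmetric]) (simp add: joint_def[symmetric])
  also have "\<dots> = (\<integral>\<^sup>+e. \<integral>\<^sup>+u. \<integral>\<^sup>+x. F (x, e, u) \<partial>rewards \<partial>unit_uniform \<partial>noises)"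
    by (rule U.nn_integral_fst[symmetric]) (measurable, simp add: joint_def)
  finally show ?thesis .
qed

lemma nn_integral_joint_resample_reward:
  assumes k: "k < n" and F: "F \<in> borel_measurable (joint D \<sigma> n)"
  shows "(\<integral>\<^sup>+\<omega>. F \<omega> \<partial>joint D \<sigma> n) = (\<integral>\<^sup>+a. \<integral>\<^sup>+(x, v). F (x(k := a), v) \<partial>joint D \<sigma> n \<partial>D)"
proof -
  note F[unfolded joint_def, measurable]
  have "(\<integral>\<^sup>+\<omega>. F \<omega> \<partial>joint D \<sigma> n) =
      (\<integral>\<^sup>+a. \<integral>\<^sup>+x. \<integral>\<^sup>+v. F (x(k := a), v) \<partial>(noises \<Otimes>\<^sub>M unit_uniform) \<partial>rewards \<partial>D)"
    unfolding nn_integral_joint_reward_outer[OF F]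
    by (rule PD.nn_integral_PiM_resample) (use k D in \<open>auto simp: joint_def[symmetric]\<close>)
  also have "\<dots> = (\<integral>\<^sup>+a. \<integral>\<^sup>+(x, v). F (x(k := a), v) \<partial>joint D \<sigma> n \<partial>D)"
  proof (rule nn_integral_cong)
    fix a assume "a \<in> space D"
    then have [measurable]: "(\<lambda>x. x(k := a)) \<in> rewards \<rightarrow>\<^sub>M rewards"
      using k by (intro measurable_fun_upd_const) auto
    have "(\<lambda>(x, v). F (x(k := a), v)) \<in> borel_measurable (joint D \<sigma> n)"
      unfolding joint_def by measurable
    from nn_integral_joint_reward_outer[OF this]
    show "(\<integral>\<^sup>+x. \<integral>\<^sup>+v. F (x(k := a), v) \<partial>(noises \<Otimes>\<^sub>M unit_uniform) \<partial>rewards) =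
        (\<integral>\<^sup>+(x, v). F (x(k := a), v) \<partial>joint D \<sigma> n)"
      by simp
  qed
  finally show ?thesis .
qed

lemma nn_integral_joint_resample_noise:
  assumes k: "k < n" and F: "F \<in> borel_measurable (joint D \<sigma> n)"
  shows "(\<integral>\<^sup>+\<omega>. F \<omega> \<partial>joint D \<sigma> n) = (\<integral>\<^sup>+t. \<integral>\<^sup>+(x, e, u). F (x, e(k := t), u) \<partial>joint D \<sigma> n \<partial>noise \<sigma>)"
proof -
  note F[unfolded joint_def, measurable]
  have "(\<integral>\<^sup>+\<omega>. F \<omega> \<partial>joint D \<sigma> n) =
      (\<integral>\<^sup>+t. \<integral>\<^sup>+e. \<integral>\<^sup>+u. \<integral>\<^sup>+x. F (x, e(k := t), u) \<partial>rewards \<partial>unit_uniform \<partial>noises \<partial>noise \<sigma>)"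
    unfolding nn_integral_joint_noise_outer[OF F]
    by (rule PN.nn_integral_PiM_resample)
      (use k \<sigma> prob_space_noise in \<open>auto simp: joint_def[symmetric]\<close>)
  also have "\<dots> = (\<integral>\<^sup>+t. \<integral>\<^sup>+(x, e, u). F (x, e(k := t), u) \<partial>joint D \<sigma> n \<partial>noise \<sigma>)"
  proof (rule nn_integral_cong)
    fix t assume "t \<in> space (noise \<sigma>)"
    then have [measurable]: "(\<lambda>e. e(k := t)) \<in> noises \<rightarrow>\<^sub>M noises"
      using k by (intro measurable_fun_upd_const) auto
    have "(\<lambda>(x, e, u). F (x, e(k := t), u)) \<in> borel_measurable (joint D \<sigma> n)"
      unfolding joint_def by measurable
    from nn_integral_joint_noise_outer[OF this]
    show "(\<integral>\<^sup>+e. \<integral>\<^sup>+u. \<integral>\<^sup>+x. F (x, e(k := t), u) \<partial>rewards \<partial>unit_uniform \<partial>noises) =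
        (\<integral>\<^sup>+(x, e, u). F (x, e(k := t), u) \<partial>joint D \<sigma> n)"
      by simp
  qed
  finally show ?thesis .
qed

end

section \<open>The two-point reward law\<close>

definition two_point :: "real \<Rightarrow> real \<Rightarrow> real measure" where
  "two_point p \<delta> = distr (measure_pmf (bernoulli_pmf p)) borel (\<lambda>b. if b then \<delta> else 0)"

lemma sets_two_point[measurable_cong]: "sets (two_point p \<delta>) = sets borel"
  by (simp add: two_point_def)

lemma prob_space_two_point: "prob_space (two_point p \<delta>)"
  unfolding two_point_def
  by (rule prob_space.prob_space_distr) (auto simp: measure_pmf.prob_space_axioms)

lemma AE_two_point: "AE a in two_point p \<delta>. a = 0 \<or> a = \<delta>"
  unfolding two_point_def by (subst AE_distr_iff) auto

lemma emeasure_two_point_singleton: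
  assumes "0 \<le> p" "p \<le> 1" "\<delta> \<noteq> 0"
  shows "emeasure (two_point p \<delta>) {0} = 1 - p" "emeasure (two_point p \<delta>) {\<delta>} = p"
proof -
  have "(\<lambda>b. if b then \<delta> else 0) -` {0} = {False}" "(\<lambda>b. if b then \<delta> else 0) -` {\<delta>} = {True}"
    using assms by (auto split: if_splits)
  then show "emeasure (two_point p \<delta>) {0} = 1 - p" "emeasure (two_point p \<delta>) {\<delta>} = p"
    unfolding two_point_def using assms by (simp_all add: emeasure_distr emeasure_pmf_single)
qed

lemma nn_integral_two_point:
  assumes "0 \<le> p" "p \<le> 1" "\<delta> \<noteq> 0"
  shows "(\<integral>\<^sup>+a. g a \<partial>two_point p \<delta>) = ennreal (1 - p) * g 0 + ennreal p * g \<delta>"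
proof -
  have "(\<integral>\<^sup>+a. g a \<partial>two_point p \<delta>) =
      (\<integral>\<^sup>+a. g 0 * indicator {0} a + g \<delta> * indicator {\<delta>} a \<partial>two_point p \<delta>)"
    using AE_two_point by (rule nn_integral_cong_AE[OF eventually_mono]) (auto simp: assms)
  also have "\<dots> = g 0 * emeasure (two_point p \<delta>) {0} + g \<delta> * emeasure (two_point p \<delta>) {\<delta>}"
    by (subst nn_integral_add) (auto simp: nn_integral_cmult_indicator)
  finally show ?thesis
    using emeasure_two_point_singleton[OF assms] by (simp add: mult.commute)
qed

lemma emeasure_two_point_unit_interval:
  "0 \<le> p \<Longrightarrow> p \<le> 1 \<Longrightarrow> 0 < \<delta> \<Longrightarrow> \<delta> \<le> 1 \<Longrightarrow> emeasure (two_point p \<delta>) {0..1} = 1"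
  using nn_integral_two_point[where g = "indicator {0..1}" and p = p and \<delta> = \<delta>]
  by (simp add: ennreal_plus[symmetric] del: ennreal_plus)

lemma prophet_two_point:
  assumes p: "0 \<le> p" "p \<le> 1" and \<delta>: "0 < \<delta>" and n: "n \<ge> 1"
  shows "prophet (two_point p \<delta>) n = \<delta> * (1 - (1 - p) ^ n)"
proof -
  interpret PD: product_sigma_finite "\<lambda>_::nat. two_point p \<delta>"
    by (simp add: product_sigma_finite_def prob_space_imp_sigma_finite prob_space_two_point)
  interpret P: prob_space "PiM {..<n} (\<lambda>_. two_point p \<delta>)"
    by (intro prob_space_PiM prob_space_two_point)
  define Z where "Z x = (\<Prod>i<n. indicator {0} (x i) :: real)" for x :: "nat \<Rightarrow> real"
  have "AE x in PiM {..<n} (\<lambda>_. two_point p \<delta>). \<forall>i\<in>{..<n}. x i = 0 \<or> x i = \<delta>"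
    by (intro eventually_ball_finite ballI AE_PiM_component prob_space_two_point AE_two_point) auto
  then have "AE x in PiM {..<n} (\<lambda>_. two_point p \<delta>). (MAX i\<in>{..<n}. x i) = \<delta> - \<delta> * Z x"
  proof eventually_elim
    case (elim x)
    show ?case
    proof (cases "\<exists>i<n. x i = \<delta>")
      case True
      then have "(MAX i\<in>{..<n}. x i) = \<delta>"
        using elim \<delta> by (intro Max_eqI) force+
      moreover obtain i where "i < n" "x i = \<delta>"
        using True by blast
      then have "Z x = 0"
        unfolding Z_def using \<delta> by (intro prod_zero bexI[of _ i]) auto
      ultimately show ?thesis by simp
    next
      case False
      then have "x ` {..<n} = {0}" "Z x = 1"
        using elim n by (force, simp add: Z_def)
      then show ?thesis by simp
    qed
  qed
  then have "prophet (two_point p \<delta>) n = (\<integral>x. \<delta> - \<delta> * Z x \<partial>PiM {..<n} (\<lambda>_. two_point p \<delta>))"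
    unfolding prophet_def Z_def by (intro integral_cong_AE) auto
  also have "\<dots> = \<delta> - \<delta> * (\<integral>x. Z x \<partial>PiM {..<n} (\<lambda>_. two_point p \<delta>))"
  proof -
    have "0 \<le> Z x" "Z x \<le> 1" for x
      unfolding Z_def by (auto intro!: prod_nonneg prod_le_1)
    moreover have "Z \<in> borel_measurable (PiM {..<n} (\<lambda>_. two_point p \<delta>))"
      unfolding Z_def by measurable
    ultimately have "integrable (PiM {..<n} (\<lambda>_. two_point p \<delta>)) Z"
      by (intro P.integrable_const_bound[where B = 1]) auto
    then show ?thesis by (simp add: P.prob_space)
  qed
  also have "(\<integral>x. Z x \<partial>PiM {..<n} (\<lambda>_. two_point p \<delta>)) =
      (\<Prod>i<n. \<integral>a. indicator {0} a \<partial>two_point p \<delta>)"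
    unfolding Z_def using p \<delta>
    by (intro PD.product_integral_prod integrable_real_indicator)
      (auto simp: emeasure_two_point_singleton)
  also have "(\<integral>a. indicator {0} a \<partial>two_point p \<delta>) = 1 - p"
    using p \<delta> by (simp add: measure_def emeasure_two_point_singleton)
  finally show ?thesis by (simp add: algebra_simps)
qed

section \<open>Shifting the Gaussian noise\<close>

lemma normal_density_shift_le:
  fixes \<sigma> \<delta> s :: real
  assumes "\<sigma> > 0" "\<delta> \<ge> 0"
  shows "normal_density \<delta> \<sigma> s \<le>
    normal_density 0 \<sigma> s + normal_density \<delta> \<sigma> s * ((\<bar>s - \<delta>\<bar> + \<delta>) * \<delta> / \<sigma>\<^sup>2)"
proof -
  define z where "z = (\<delta>\<^sup>2 - 2 * s * \<delta>) / (2 * \<sigma>\<^sup>2)"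
  have "normal_density 0 \<sigma> s = normal_density \<delta> \<sigma> s * exp z"
    unfolding normal_density_def z_def mult.assoc exp_add[symmetric] using assms
    by (simp add: field_simps power2_eq_square)
  also have "\<dots> \<ge> normal_density \<delta> \<sigma> s * (1 + z)"
    by (intro mult_left_mono exp_ge_add_one_self) simp
  finally have "normal_density \<delta> \<sigma> s \<le> normal_density 0 \<sigma> s + normal_density \<delta> \<sigma> s * - z"
    by (simp add: algebra_simps)
  moreover have "- z \<le> (\<bar>s - \<delta>\<bar> + \<delta>) * \<delta> / \<sigma>\<^sup>2"
  proof -
    have "- z \<le> s * \<delta> / \<sigma>\<^sup>2"
      unfolding z_def using assms by (simp add: field_simps)
    also have "\<dots> \<le> (\<bar>s - \<delta>\<bar> + \<delta>) * \<delta> / \<sigma>\<^sup>2"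
      using assms by (intro divide_right_mono mult_right_mono) auto
    finally show ?thesis .
  qed
  then have "normal_density \<delta> \<sigma> s * - z \<le> normal_density \<delta> \<sigma> s * ((\<bar>s - \<delta>\<bar> + \<delta>) * \<delta> / \<sigma>\<^sup>2)"
    by (intro mult_left_mono) simp_all
  ultimately show ?thesis
    by linarith
qed

lemma nn_integral_normal_density_abs_dev:
  assumes "\<sigma> > 0" "\<delta> \<ge> 0"
  shows "(\<integral>\<^sup>+s. ennreal (normal_density \<delta> \<sigma> s * (\<bar>s - \<delta>\<bar> + \<delta>)) \<partial>lborel) =
    ennreal (\<sigma> * sqrt (2 / pi) + \<delta>)"
proof -
  (* the exponent is written 2 * 0 + 1 to match integral_normal_moment_abs_odd *)
  define f where
    "f s = normal_density \<delta> \<sigma> s * \<bar>s - \<delta>\<bar> ^ (2 * 0 + 1) + \<delta> * normal_density \<delta> \<sigma> s" for s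
  have eq: "normal_density \<delta> \<sigma> s * (\<bar>s - \<delta>\<bar> + \<delta>) = f s" for s
    by (simp add: algebra_simps f_def)
  have f: "integrable lborel f" and int: "(\<integral>s. f s \<partial>lborel) = \<sigma> * sqrt (2 / pi) + \<delta>"
    unfolding f_def
    using integrable_normal_moment_abs[OF assms(1), of \<delta> 1]
      integrable_normal_density[OF assms(1), of \<delta>] integral_normal_moment_abs_odd[OF assms(1), of \<delta> 0] integral_normal_density[OF assms(1), of \<delta>]
    by auto
  show ?thesis
    unfolding eq int[symmetric]
    by (rule nn_integral_eq_integral[OF f]) (use assms in \<open>auto simp: f_def\<close>)
qed

(* \<delta>/\<sigma>\<^sup>2 times E(|Y - \<delta>| + \<delta>) for Y ~ N(\<delta>, \<sigma>\<^sup>2); by normal_density_shift_le it bounds the total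
   variation distance between N(\<delta>, \<sigma>\<^sup>2) and N(0, \<sigma>\<^sup>2). *)
definition shift_tv_bound :: "real \<Rightarrow> real \<Rightarrow> real" where
  "shift_tv_bound \<sigma> \<delta> = \<delta> / \<sigma>\<^sup>2 * (\<sigma> * sqrt (2 / pi) + \<delta>)"

lemma shift_tv_bound_nonneg: "\<sigma> > 0 \<Longrightarrow> \<delta> \<ge> 0 \<Longrightarrow> shift_tv_bound \<sigma> \<delta> \<ge> 0"
  by (simp add: shift_tv_bound_def)

lemma shift_tv_bound_tendsto_0:
  assumes "\<sigma> > 0" and "(f \<longlongrightarrow> 0) F"
  shows "((\<lambda>x. shift_tv_bound \<sigma> (f x)) \<longlongrightarrow> 0) F"
  using assms unfolding shift_tv_bound_def by (auto intro!: tendsto_eq_intros)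

lemma nn_integral_noise_shift_le:
  fixes K :: "real \<Rightarrow> ennreal"
  assumes \<sigma>: "\<sigma> > 0" and \<delta>: "\<delta> \<ge> 0" and K[measurable]: "K \<in> borel_measurable borel"
    and K_le_1: "\<And>s. K s \<le> 1"
  shows "(\<integral>\<^sup>+t. K (\<delta> + t) \<partial>noise \<sigma>) \<le> (\<integral>\<^sup>+t. K t \<partial>noise \<sigma>) + shift_tv_bound \<sigma> \<delta>"
proof -
  define R where "R s = normal_density \<delta> \<sigma> s * (\<bar>s - \<delta>\<bar> + \<delta>)" for s
  have R_nonneg: "0 \<le> R s" for s
    using \<delta> by (simp add: R_def)
  have "(\<integral>\<^sup>+t. K (\<delta> + t) \<partial>noise \<sigma>) = (\<integral>\<^sup>+t. normal_density 0 \<sigma> t * K (\<delta> + t) \<partial>lborel)"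
    unfolding noise_def by (simp add: nn_integral_density)
  also have "\<dots> = (\<integral>\<^sup>+s. normal_density \<delta> \<sigma> s * K s \<partial>lborel)"
    by (subst lborel_distr_plus[of \<delta>, symmetric]) (simp add: nn_integral_distr normal_density_def)
  also have "\<dots> \<le> (\<integral>\<^sup>+s. normal_density 0 \<sigma> s * K s + ennreal (R s * \<delta> / \<sigma>\<^sup>2) \<partial>lborel)"
  proof (intro nn_integral_mono)
    fix s
    have "ennreal (normal_density \<delta> \<sigma> s) \<le> normal_density 0 \<sigma> s + ennreal (R s * \<delta> / \<sigma>\<^sup>2)"
      using normal_density_shift_le[OF \<sigma> \<delta>, of s] R_nonneg[of s] \<delta>
      by (simp add: R_def ennreal_plus[symmetric] del: ennreal_plus)
    then have "normal_density \<delta> \<sigma> s * K s \<le> (normal_density 0 \<sigma> s + ennreal (R s * \<delta> / \<sigma>\<^sup>2)) * K s"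
      by (rule mult_right_mono) simp
    also have "\<dots> \<le> normal_density 0 \<sigma> s * K s + ennreal (R s * \<delta> / \<sigma>\<^sup>2)"
      using mult_left_mono[OF K_le_1[of s], of "ennreal (R s * \<delta> / \<sigma>\<^sup>2)"]
      by (simp add: distrib_right)
    finally show "normal_density \<delta> \<sigma> s * K s \<le>
        normal_density 0 \<sigma> s * K s + ennreal (R s * \<delta> / \<sigma>\<^sup>2)" .
  qed
  also have "\<dots> =
      (\<integral>\<^sup>+s. normal_density 0 \<sigma> s * K s \<partial>lborel) + (\<integral>\<^sup>+s. ennreal (R s * \<delta> / \<sigma>\<^sup>2) \<partial>lborel)"
    by (rule nn_integral_add) (auto simp: R_def)
  also have "(\<integral>\<^sup>+s. normal_density 0 \<sigma> s * K s \<partial>lborel) = (\<integral>\<^sup>+t. K t \<partial>noise \<sigma>)"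
    unfolding noise_def by (simp add: nn_integral_density)
  also have "(\<integral>\<^sup>+s. ennreal (R s * \<delta> / \<sigma>\<^sup>2) \<partial>lborel) =
      (\<integral>\<^sup>+s. R s \<partial>lborel) * ennreal (\<delta> / \<sigma>\<^sup>2)"
  proof -
    have "ennreal (R s * \<delta> / \<sigma>\<^sup>2) = ennreal (R s) * ennreal (\<delta> / \<sigma>\<^sup>2)" for s
      using R_nonneg[of s] \<delta> by (simp add: ennreal_mult[symmetric])
    then show ?thesis
      by (simp add: nn_integral_multc R_def)
  qed
  also have "\<dots> = shift_tv_bound \<sigma> \<delta>"
    using \<sigma> \<delta>
    unfolding R_def shift_tv_bound_def nn_integral_normal_density_abs_dev[OF \<sigma> \<delta>]
    by (simp add: ennreal_mult[symmetric] mult.commute del: ennreal_plus)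
  finally show ?thesis .
qed

section \<open>Acceptance probabilities of a rule\<close>

type_synonym stopping_rule = "(nat \<Rightarrow> real) \<times> real \<Rightarrow> nat"

definition accepts ::
    "nat \<Rightarrow> stopping_rule \<Rightarrow> nat \<Rightarrow> (nat \<Rightarrow> real) \<Rightarrow> (nat \<Rightarrow> real) \<Rightarrow> real \<Rightarrow> ennreal" where
  "accepts n \<tau> k x e u = of_bool (\<tau> (\<lambda>i\<in>{..<n}. x i + e i, u) = k)"

lemma measurable_rule:
  "\<tau> \<in> rules n \<Longrightarrow> \<tau> \<in> PiM {..<n} (\<lambda>_. borel) \<Otimes>\<^sub>M borel \<rightarrow>\<^sub>M count_space UNIV"
  by (simp add: rules_def)

lemma borel_measurable_accepts:
  assumes \<tau>: "\<tau> \<in> rules n" and [measurable_cong]: "sets D = sets borel"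
  shows "(\<lambda>(x, e, u). accepts n \<tau> k x e u) \<in> borel_measurable (joint D \<sigma> n)"
    and "(\<lambda>(x, e, u). accepts n \<tau> k (x(k := c)) e u) \<in> borel_measurable (joint D \<sigma> n)"
    and "k < n \<Longrightarrow>
      (\<lambda>(x, e, u). accepts n \<tau> k x e u * ennreal (x k)) \<in> borel_measurable (joint D \<sigma> n)"
  supply measurable_rule[OF \<tau>, measurable]
  unfolding accepts_def joint_def by measurable

lemma sum_accepts_le_1: "(\<Sum>k<n. accepts n \<tau> k x e u) \<le> 1"
  by (cases "\<tau> (\<lambda>i\<in>{..<n}. x i + e i, u) < n")
    (simp_all add: accepts_def of_bool_def sum.If_cases)

lemma stopped_reward_eq_sum_accepts:
  "ennreal (if \<tau> (\<lambda>i\<in>{..<n}. x i + e i, u) < n then x (\<tau> (\<lambda>i\<in>{..<n}. x i + e i, u)) else 0) =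
    (\<Sum>k<n. accepts n \<tau> k x e u * ennreal (x k))"
proof -
  have "(\<Sum>k<n. accepts n \<tau> k x e u * ennreal (x k)) =
      (\<Sum>k<n. if \<tau> (\<lambda>i\<in>{..<n}. x i + e i, u) = k then ennreal (x k) else 0)"
    by (intro sum.cong) (auto simp: accepts_def)
  then show ?thesis
    by simp
qed

lemma sum_nn_integral_accepts_le_1:
  assumes "prob_space D" "sets D = sets borel" "\<sigma> > 0" "\<tau> \<in> rules n"
  shows "(\<Sum>k<n. \<integral>\<^sup>+(x, e, u). accepts n \<tau> k x e u \<partial>joint D \<sigma> n) \<le> 1"
proof -
  interpret J: prob_space "joint D \<sigma> n"
    using assms(1,3) by (rule prob_space_joint)
  have "(\<Sum>k<n. \<integral>\<^sup>+(x, e, u). accepts n \<tau> k x e u \<partial>joint D \<sigma> n) =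
      (\<integral>\<^sup>+\<omega>. (\<Sum>k<n. (\<lambda>(x, e, u). accepts n \<tau> k x e u) \<omega>) \<partial>joint D \<sigma> n)"
    using borel_measurable_accepts(1)[OF assms(4,2)] by (intro nn_integral_sum[symmetric]) simp
  also have "\<dots> \<le> (\<integral>\<^sup>+\<omega>. 1 \<partial>joint D \<sigma> n)"
    by (intro nn_integral_mono) (simp add: case_prod_unfold sum_accepts_le_1)
  finally show ?thesis
    by (simp add: J.emeasure_space_1)
qed

(* P(\<tau> = k | X_k = c): by independence, conditioning on X_k = c amounts to overwriting X_k by c. *)
definition acceptance :: "real measure \<Rightarrow> real \<Rightarrow> nat \<Rightarrow> stopping_rule \<Rightarrow> nat \<Rightarrow> real \<Rightarrow> ennreal" where
  "acceptance D \<sigma> n \<tau> k c = (\<integral>\<^sup>+(x, e, u). accepts n \<tau> k (x(k := c)) e u \<partial>joint D \<sigma> n)"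

context
  fixes D :: "real measure" and \<sigma> :: real and n k :: nat and \<tau> :: stopping_rule
  assumes D: "prob_space D" and sets_D[measurable_cong]: "sets D = sets borel"
    and \<sigma>: "\<sigma> > 0" and k: "k < n" and \<tau>: "\<tau> \<in> rules n"
begin

interpretation J: prob_space "joint D \<sigma> n"
  using D \<sigma> by (rule prob_space_joint)

declare measurable_rule[OF \<tau>, measurable] borel_measurable_accepts(1,2)[OF \<tau> sets_D, measurable]

(* With X_k fixed to c the k-th observation is c + \<eta>_k, so raising c by \<delta> shifts the Gaussian. *)
lemma acceptance_shift_le:
  assumes "\<delta> \<ge> 0"
  shows "acceptance D \<sigma> n \<tau> k (c + \<delta>) \<le> acceptance D \<sigma> n \<tau> k c + shift_tv_bound \<sigma> \<delta>"
proof -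
  define L :: "real \<Rightarrow> (nat \<Rightarrow> real) \<times> (nat \<Rightarrow> real) \<times> real \<Rightarrow> ennreal"
    where "L s = (\<lambda>(x, e, u). of_bool (\<tau> (\<lambda>i\<in>{..<n}. if i = k then s else x i + e i, u) = k))" for s
  define K where "K s = (\<integral>\<^sup>+\<omega>. L s \<omega> \<partial>joint D \<sigma> n)" for s
  have [measurable]: "(\<lambda>(s, \<omega>). L s \<omega>) \<in> borel_measurable (borel \<Otimes>\<^sub>M joint D \<sigma> n)"
    unfolding L_def joint_def by measurable
  have [measurable]: "K \<in> borel_measurable borel"
    unfolding K_def by measurable
  have K_le_1: "K s \<le> 1" for s
  proof -
    have "K s \<le> (\<integral>\<^sup>+\<omega>. 1 \<partial>joint D \<sigma> n)"
      unfolding K_def L_def by (intro nn_integral_mono) auto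
    then show ?thesis
      by (simp add: J.emeasure_space_1)
  qed
  have acceptance_eq: "acceptance D \<sigma> n \<tau> k c' = (\<integral>\<^sup>+t. K (c' + t) \<partial>noise \<sigma>)" for c'
  proof -
    have "(\<lambda>i\<in>{..<n}. (x(k := c')) i + (e(k := t)) i) =
        (\<lambda>i\<in>{..<n}. if i = k then c' + t else x i + e i)" for x e :: "nat \<Rightarrow> real" and t
      by (auto simp: fun_eq_iff)
    then have "accepts n \<tau> k (x(k := c')) (e(k := t)) u = L (c' + t) (x, e, u)" for x e u t
      unfolding accepts_def L_def by simp
    then show ?thesis
      unfolding acceptance_def K_def
      by (subst nn_integral_joint_resample_noise[OF D \<sigma> k]) simp_all
  qed
  show ?thesis
    unfolding acceptance_eq add.assoc
    using nn_integral_noise_shift_le[OF \<sigma> assms, of "\<lambda>s. K (c + s)"] K_le_1 by (simp add: ac_simps)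
qed

lemma nn_integral_accepts_resample:
  "(\<integral>\<^sup>+(x, e, u). accepts n \<tau> k x e u \<partial>joint D \<sigma> n) = (\<integral>\<^sup>+a. acceptance D \<sigma> n \<tau> k a \<partial>D)"
  unfolding acceptance_def by (subst nn_integral_joint_resample_reward[OF D \<sigma> k]) simp_all

lemma nn_integral_accepts_reward_resample:
  "(\<integral>\<^sup>+(x, e, u). accepts n \<tau> k x e u * ennreal (x k) \<partial>joint D \<sigma> n) =
    (\<integral>\<^sup>+a. ennreal a * acceptance D \<sigma> n \<tau> k a \<partial>D)"
proof -
  note borel_measurable_accepts(3)[OF \<tau> sets_D k, measurable]
  have "(\<integral>\<^sup>+(x, e, u). accepts n \<tau> k x e u * ennreal (x k) \<partial>joint D \<sigma> n) =
      (\<integral>\<^sup>+a. \<integral>\<^sup>+(x, e, u). accepts n \<tau> k (x(k := a)) e u * ennreal a \<partial>joint D \<sigma> n \<partial>D)"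
    by (subst nn_integral_joint_resample_reward[OF D \<sigma> k]) simp_all
  also have "\<dots> = (\<integral>\<^sup>+a. acceptance D \<sigma> n \<tau> k a * ennreal a \<partial>D)"
  proof (rule nn_integral_cong)
    fix a
    have "(\<integral>\<^sup>+(x, e, u). accepts n \<tau> k (x(k := a)) e u * ennreal a \<partial>joint D \<sigma> n) =
        (\<integral>\<^sup>+\<omega>. (\<lambda>(x, e, u). accepts n \<tau> k (x(k := a)) e u) \<omega> * ennreal a \<partial>joint D \<sigma> n)"
      by (simp add: case_prod_unfold)
    also have "\<dots> = acceptance D \<sigma> n \<tau> k a * ennreal a"
      unfolding acceptance_def
      by (rule nn_integral_multc) (rule borel_measurable_accepts(2)[OF \<tau> sets_D])
    finally show "(\<integral>\<^sup>+(x, e, u). accepts n \<tau> k (x(k := a)) e u * ennreal a \<partial>joint D \<sigma> n) =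
        acceptance D \<sigma> n \<tau> k a * ennreal a" .
  qed
  finally show ?thesis
    by (simp add: mult.commute)
qed

end

section \<open>The payoff against two-point rewards\<close>

context
  fixes \<sigma> p \<delta> :: real and n :: nat and \<tau> :: stopping_rule
  assumes \<sigma>: "\<sigma> > 0" and p: "0 < p" "p < 1" and \<delta>: "\<delta> > 0" and \<tau>: "\<tau> \<in> rules n"
begin

lemma accepts_reward_two_point_le:
  assumes k: "k < n"
  shows "(\<integral>\<^sup>+(x, e, u). accepts n \<tau> k x e u * ennreal (x k) \<partial>joint (two_point p \<delta>) \<sigma> n) \<le>
    ennreal (p * \<delta> / (1 - p)) * (\<integral>\<^sup>+(x, e, u). accepts n \<tau> k x e u \<partial>joint (two_point p \<delta>) \<sigma> n)
    + ennreal (p * \<delta> * shift_tv_bound \<sigma> \<delta>)"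
proof -
  note setting = prob_space_two_point[of p \<delta>] sets_two_point[of p \<delta>] \<sigma> k \<tau>
  define A where "A = acceptance (two_point p \<delta>) \<sigma> n \<tau> k"
  define T where "T = shift_tv_bound \<sigma> \<delta>"
  have p': "0 \<le> p" "p \<le> 1" "\<delta> \<noteq> 0"
    using p \<delta> by auto
  have "(\<integral>\<^sup>+(x, e, u). accepts n \<tau> k x e u * ennreal (x k) \<partial>joint (two_point p \<delta>) \<sigma> n) =
      ennreal (p * \<delta>) * A \<delta>"
    using p \<delta>
    unfolding nn_integral_accepts_reward_resample[OF setting] nn_integral_two_point[OF p'] A_def
    by (simp add: ennreal_mult mult.assoc)
  also have "\<dots> \<le> ennreal (p * \<delta>) * (A 0 + T)"
    using acceptance_shift_le[OF setting, of \<delta> 0] \<delta> unfolding A_def T_def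
    by (intro mult_left_mono) simp_all
  also have "\<dots> = ennreal (p * \<delta> / (1 - p)) * (ennreal (1 - p) * A 0) + ennreal (p * \<delta> * T)"
    using p \<delta> shift_tv_bound_nonneg[OF \<sigma> less_imp_le[OF \<delta>]]
    by (simp add: T_def distrib_left ennreal_mult[symmetric] mult.assoc[symmetric])
  also have "\<dots> \<le>
      ennreal (p * \<delta> / (1 - p)) * (\<integral>\<^sup>+(x, e, u). accepts n \<tau> k x e u \<partial>joint (two_point p \<delta>) \<sigma> n)
      + ennreal (p * \<delta> * T)"
    unfolding nn_integral_accepts_resample[OF setting] nn_integral_two_point[OF p'] A_def
    by (intro add_right_mono mult_left_mono) simp_all
  finally show ?thesis
    unfolding T_def .
qed

lemma payoff_two_point_le:
  "payoff (two_point p \<delta>) \<sigma> n \<tau> \<le> \<delta> * (p / (1 - p) + n * p * shift_tv_bound \<sigma> \<delta>)"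
proof -
  define J where "J = joint (two_point p \<delta>) \<sigma> n"
  define c where "c = p * \<delta> / (1 - p)"
  define d where "d = p * \<delta> * shift_tv_bound \<sigma> \<delta>"
  have c: "c \<ge> 0" and d: "d \<ge> 0"
    using p \<delta> shift_tv_bound_nonneg[OF \<sigma> less_imp_le[OF \<delta>]] by (auto simp: c_def d_def)
  have total: "(\<Sum>k<n. \<integral>\<^sup>+(x, e, u). accepts n \<tau> k x e u \<partial>J) \<le> 1"
    unfolding J_def using prob_space_two_point sets_two_point \<sigma> \<tau>
    by (rule sum_nn_integral_accepts_le_1)
  note measurable =
    borel_measurable_accepts(3)[OF \<tau> sets_two_point[of p \<delta>], where \<sigma> = \<sigma>, folded J_def]
  have "(\<integral>\<^sup>+(x, e, u). (\<Sum>k<n. accepts n \<tau> k x e u * ennreal (x k)) \<partial>J) =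
      (\<integral>\<^sup>+\<omega>. (\<Sum>k<n. (\<lambda>(x, e, u). accepts n \<tau> k x e u * ennreal (x k)) \<omega>) \<partial>J)"
    by (simp add: case_prod_unfold)
  also have "\<dots> = (\<Sum>k<n. \<integral>\<^sup>+(x, e, u). accepts n \<tau> k x e u * ennreal (x k) \<partial>J)"
    using measurable by (intro nn_integral_sum) simp
  also have "\<dots> \<le> (\<Sum>k<n. ennreal c * (\<integral>\<^sup>+(x, e, u). accepts n \<tau> k x e u \<partial>J) + ennreal d)"
    unfolding J_def c_def d_def by (intro sum_mono accepts_reward_two_point_le) simp
  also have "\<dots> = ennreal c * (\<Sum>k<n. \<integral>\<^sup>+(x, e, u). accepts n \<tau> k x e u \<partial>J) + n * ennreal d"
    by (simp add: sum.distrib sum_distrib_left)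
  also have "\<dots> \<le> ennreal c * 1 + n * ennreal d"
    using total by (intro add_right_mono mult_left_mono) simp_all
  also have "\<dots> = ennreal (c + n * d)"
    using c d by (simp add: ennreal_mult ennreal_of_nat_eq_real_of_nat)
  finally have "(\<integral>\<^sup>+\<omega>. ennreal (case \<omega> of (x, e, u) \<Rightarrow>
      if \<tau> (\<lambda>i\<in>{..<n}. x i + e i, u) < n then x (\<tau> (\<lambda>i\<in>{..<n}. x i + e i, u)) else 0) \<partial>J)
      \<le> ennreal (c + n * d)"
    by (simp add: case_prod_unfold stopped_reward_eq_sum_accepts)
  then have "payoff (two_point p \<delta>) \<sigma> n \<tau> \<le> c + n * d"
    unfolding payoff_def J_def[symmetric] Let_def case_prod_unfold
    using c d by (intro integral_real_bounded) simp_all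
  then show ?thesis
    using p by (simp add: c_def d_def field_simps)
qed

end

lemma SUP_payoff_two_point:
  assumes \<sigma>: "\<sigma> > 0" and p: "0 < p" "p < 1" and \<delta>: "\<delta> > 0"
  shows "0 \<le> (SUP \<tau>\<in>rules n. payoff (two_point p \<delta>) \<sigma> n \<tau>)"
    and "(SUP \<tau>\<in>rules n. payoff (two_point p \<delta>) \<sigma> n \<tau>) \<le>
      \<delta> * (p / (1 - p) + n * p * shift_tv_bound \<sigma> \<delta>)"
proof -
  have never_stop: "(\<lambda>_. n) \<in> rules n"
    by (simp add: rules_def)
  have bounded: "payoff (two_point p \<delta>) \<sigma> n \<tau> \<le> \<delta> * (p / (1 - p) + n * p * shift_tv_bound \<sigma> \<delta>)"
    if "\<tau> \<in> rules n" for \<tau>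
    using \<sigma> p \<delta> that by (rule payoff_two_point_le)
  then have "bdd_above ((\<lambda>\<tau>. payoff (two_point p \<delta>) \<sigma> n \<tau>) ` rules n)"
    by (intro bdd_aboveI2)
  from cSUP_upper[OF never_stop this]
  show "0 \<le> (SUP \<tau>\<in>rules n. payoff (two_point p \<delta>) \<sigma> n \<tau>)"
    by (simp add: payoff_def)
  show "(SUP \<tau>\<in>rules n. payoff (two_point p \<delta>) \<sigma> n \<tau>) \<le>
      \<delta> * (p / (1 - p) + n * p * shift_tv_bound \<sigma> \<delta>)"
    using never_stop bounded by (intro cSUP_least) auto
qed

lemma one_minus_inverse_Suc_power_le_half:
  assumes "n \<ge> 1"
  shows "(1 - 1 / (real n + 1)) ^ n \<le> 1 / 2"
proof -
  have "0 \<le> 1 / real n"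
    by simp
  then have "1 + real n * (1 / real n) \<le> (1 + 1 / real n) ^ n"
    by (intro Bernoulli_inequality) linarith
  then have "2 \<le> (1 + 1 / real n) ^ n"
    using assms by simp
  have "1 - 1 / (real n + 1) = inverse (1 + 1 / real n)"
    using assms by (simp add: field_simps)
  then have "(1 - 1 / (real n + 1)) ^ n = inverse ((1 + 1 / real n) ^ n)"
    by (simp add: power_inverse)
  also have "\<dots> \<le> inverse 2"
    using \<open>2 \<le> (1 + 1 / real n) ^ n\<close> by (intro le_imp_inverse_le) auto
  finally show ?thesis
    by simp
qed

lemma prophet_two_point_inverse_Suc_ge:
  assumes n: "n \<ge> 1"
  defines "q \<equiv> 1 / (real n + 1)"
  shows "prophet (two_point q q) n \<ge> q / 2"
proof -
  have q: "0 < q" "q < 1"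
    using n by (auto simp: q_def field_simps)
  have "q * (1 - q) ^ n \<le> q * (1 / 2)"
    using one_minus_inverse_Suc_power_le_half[OF n] q
    by (intro mult_left_mono) (simp_all add: q_def)
  moreover have "prophet (two_point q q) n = q - q * (1 - q) ^ n"
    using prophet_two_point[of q q n] q n by (simp add: algebra_simps)
  ultimately show ?thesis
    by linarith
qed

lemma payoff_ratio_two_point_le:
  fixes \<sigma> :: real and n :: nat
  assumes \<sigma>: "\<sigma> > 0" and n: "n \<ge> 1"
  defines "q \<equiv> 1 / (real n + 1)"
  shows "0 \<le> (SUP \<tau>\<in>rules n. payoff (two_point q q) \<sigma> n \<tau>) / prophet (two_point q q) n"
    and "(SUP \<tau>\<in>rules n. payoff (two_point q q) \<sigma> n \<tau>) / prophet (two_point q q) n \<le>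
      2 * (1 / n + shift_tv_bound \<sigma> q)"
proof -
  define S where "S = (SUP \<tau>\<in>rules n. payoff (two_point q q) \<sigma> n \<tau>)"
  define T where "T = shift_tv_bound \<sigma> q"
  have q: "0 < q" "q < 1" "q / (1 - q) = 1 / n" "n * q \<le> 1"
    using n by (auto simp: q_def field_simps)
  have T: "T \<ge> 0"
    unfolding T_def using \<sigma> q by (intro shift_tv_bound_nonneg) auto
  have "prophet (two_point q q) n \<ge> q / 2"
    using prophet_two_point_inverse_Suc_ge[OF n] by (simp add: q_def)
  moreover have "0 \<le> S" "S \<le> q * (1 / n + n * q * T)"
    using SUP_payoff_two_point[OF \<sigma> q(1,2) q(1), of n] q by (simp_all add: S_def T_def)
  ultimately have "0 \<le> S / prophet (two_point q q) n"
    and "S / prophet (two_point q q) n \<le> q * (1 / n + n * q * T) / (q / 2)"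
    using q T by (simp, intro frac_le) simp_all
  moreover have "q * (1 / n + n * q * T) / (q / 2) = 2 * (1 / n + n * q * T)"
    using q by simp
  moreover have "n * q * T \<le> T"
    using q T by (simp add: mult_left_le_one_le)
  ultimately show "0 \<le> S / prophet (two_point q q) n"
    and "S / prophet (two_point q q) n \<le> 2 * (1 / n + T)"
    by simp_all
qed

theorem proposition1:
  fixes \<sigma> :: real
  assumes "\<sigma> > 0"
  shows "\<exists>D :: nat \<Rightarrow> real measure.
           (\<forall>n\<ge>1. prob_space (D n) \<and> sets (D n) = sets borel \<and>
                   emeasure (D n) {0..1} = 1 \<and> prophet (D n) n > 0) \<and>
           (\<lambda>n. (SUP \<tau>\<in>rules n. payoff (D n) \<sigma> n \<tau>) / prophet (D n) n) \<longlonglongrightarrow> 0"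
proof -
  define q where "q n = 1 / (real n + 1)" for n :: nat
  define D where "D n = two_point (q n) (q n)" for n
  have law: "prob_space (D n) \<and> sets (D n) = sets borel \<and> emeasure (D n) {0..1} = 1 \<and>
      prophet (D n) n > 0" if "n \<ge> 1" for n
    using that less_le_trans[OF _ prophet_two_point_inverse_Suc_ge[OF that], of 0]
    by (simp add: D_def q_def prob_space_two_point sets_two_point emeasure_two_point_unit_interval)
  have "q \<longlonglongrightarrow> 0"
    using LIMSEQ_inverse_real_of_nat by (simp add: q_def[abs_def] inverse_eq_divide add.commute)
  then have upper: "(\<lambda>n. 2 * (1 / n + shift_tv_bound \<sigma> (q n))) \<longlonglongrightarrow> 0"
    using shift_tv_bound_tendsto_0[OF assms] by (auto intro!: tendsto_eq_intros lim_1_over_n)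
  have "\<forall>\<^sub>F n in sequentially. 0 \<le> (SUP \<tau>\<in>rules n. payoff (D n) \<sigma> n \<tau>) / prophet (D n) n \<and>
      (SUP \<tau>\<in>rules n. payoff (D n) \<sigma> n \<tau>) / prophet (D n) n \<le> 2 * (1 / n + shift_tv_bound \<sigma> (q n))"
    using eventually_ge_at_top[of 1]
    by eventually_elim (unfold D_def q_def, use payoff_ratio_two_point_le[OF assms] in blast)
  then have "(\<lambda>n. (SUP \<tau>\<in>rules n. payoff (D n) \<sigma> n \<tau>) / prophet (D n) n) \<longlonglongrightarrow> 0"
    by (intro tendsto_sandwich[OF _ _ tendsto_const upper]) (auto elim: eventually_mono)
  with law show ?thesis
    by blast
qed

end
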